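(* Assume $0<a,b<1$, $r>2$, $s>2$, $r>as$, $s>br$. Let $\underline\alpha\in(\tilde\alpha,1)$, $\underline\beta\in(\tilde\beta,1)$, $\bar\alpha\in(\underline\alpha,1)$, $\bar\beta\in(\underline\beta,1)$, $h\in(0,\min\{\underline c_1(\underline\alpha,\underline\beta),\underline c_2(\underline\alpha,\underline\beta)\})$. Let $(\alpha_n)_{n\in\mathbb N}$, $(\beta_n)_{n\in\mathbb N}$ satisfy $\alpha_n\in(\underline\alpha,\bar\alpha)$, $\beta_n\in(\underline\beta,\bar\beta)$ for all $n$, and let $(x_n,y_n)$ solve $$x_{n+1}=x_n[(1-\alpha_{n+1})e^{r-x_n-ay_n}+\alpha_{n+1}],\quad y_{n+1}=y_n[(1-\beta_{n+1})e^{s-bx_n-y_n}+\beta_{n+1}],\quad n\in\mathbb N_0,$$ with $x_0,y_0>0$. Then: (a) if $(x_0,y_0)\in D_{\underline\alpha,\underline\beta}$ then $(x_n,y_n)\in D_{\underline\alpha,\underline\beta}$ for all $n\in\mathbb N$; (b) if $(x_0,y_0)\in D_{\underline\alpha,\underline\beta}(h)$ then $(x_n,y_n)\in D_{\underline\alpha,\underline\beta}(h)$ for all $n\in\mathbb N$; (c) if $(x_0,y_0)\notin D_{\underline\alpha,\underline\beta}(h)$, there is $\tilde S=\tilde S(x_0,y_0,\underline\alpha,\underline\beta,\bar\alpha,\bar\beta,h)\in\mathbb N$ (not depending on the particular sequences $\alpha_n,\beta_n$) such that $(x_n,y_n)\in D_{\underline\alpha,\underline\beta}(h)$ for all $n\ge\tilde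 S$.
   Context: Let $f(\alpha,x,y)=x[(1-\alpha)e^{r-x-ay}+\alpha]$, $g(\beta,x,y)=y[(1-\beta)e^{s-bx-y}+\beta]$. Define $\mathcal H_1(\alpha)=\max\{(1-\alpha)e^{r-1}+2\alpha,\,r\}$, $\mathcal H_2(\beta)=\max\{(1-\beta)e^{s-1}+2\beta,\,s\}$, $c_1(\beta)=r-a\mathcal H_2(\beta)$, $c_2(\alpha)=s-b\mathcal H_1(\alpha)$, $\tilde\alpha=\max\{\frac{e^{r-1}-s/b}{e^{r-1}-2},0\}$, $\tilde\beta=\max\{\frac{e^{s-1}-r/a}{e^{s-1}-2},0\}$. For $\alpha\in(\tilde\alpha,1)$, $\beta\in(\tilde\beta,1)$: $\underline c_1(\alpha,\beta)=\min\{f(\alpha,x,y):x\in[c_1(\beta),\mathcal H_1(\alpha)],y\in[0,\mathcal H_2(\beta)]\}$, $\underline c_2(\alpha,\beta)=\min\{g(\beta,x,y):x\in[0,\mathcal H_1(\alpha)],y\in[c_2(\alpha),\mathcal H_2(\beta)]\}$, $D_{\alpha,\beta}=[\underline c_1(\alpha,\beta),\mathcal H_1(\alpha)]\times[\underline c_2(\alpha,\beta),\mathcal H_2(\beta)]$, $D_{\alpha,\beta}(h)=[\underline c_1(\alpha,\beta)-h,\mathcal H_1(\alpha)]\times[\underline c_2(\alpha,\beta)-h,\mathcal H_2(\beta)]$. *)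

theory Defs
  imports Complex_Main
begin

definition fmap :: "real \<Rightarrow> real \<Rightarrow> real \<Rightarrow> real \<Rightarrow> real \<Rightarrow> real" where
  "fmap r a \<alpha> x y = x * ((1 - \<alpha>) * exp (r - x - a * y) + \<alpha>)"

definition gmap :: "real \<Rightarrow> real \<Rightarrow> real \<Rightarrow> real \<Rightarrow> real \<Rightarrow> real" where
  "gmap s b \<beta> x y = y * ((1 - \<beta>) * exp (s - b * x - y) + \<beta>)"

definition H1 :: "real \<Rightarrow> real \<Rightarrow> real" where
  "H1 r \<alpha> = max ((1 - \<alpha>) * exp (r - 1) + 2 * \<alpha>) r"

definition H2 :: "real \<Rightarrow> real \<Rightarrow> real" where
  "H2 s \<beta> = max ((1 - \<beta>) * exp (s - 1) + 2 * \<beta>) s"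

definition c1 :: "real \<Rightarrow> real \<Rightarrow> real \<Rightarrow> real \<Rightarrow> real" where
  "c1 r s a \<beta> = r - a * H2 s \<beta>"

definition c2 :: "real \<Rightarrow> real \<Rightarrow> real \<Rightarrow> real \<Rightarrow> real" where
  "c2 r s b \<alpha> = s - b * H1 r \<alpha>"

definition alpha_tilde :: "real \<Rightarrow> real \<Rightarrow> real \<Rightarrow> real" where
  "alpha_tilde r s b = max ((exp (r - 1) - s / b) / (exp (r - 1) - 2)) 0"

definition beta_tilde :: "real \<Rightarrow> real \<Rightarrow> real \<Rightarrow> real" where
  "beta_tilde r s a = max ((exp (s - 1) - r / a) / (exp (s - 1) - 2)) 0"

text \<open>Minimum of a continuous function over a compact rectangle, written as Inf of the image.\<close>
definition lc1 :: "real \<Rightarrow> real \<Rightarrow> real \<Rightarrow> real \<Rightarrow> real \<Rightarrow> real" where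
  "lc1 r s a \<alpha> \<beta> =
     Inf ((\<lambda>(x, y). fmap r a \<alpha> x y) ` ({c1 r s a \<beta> .. H1 r \<alpha>} \<times> {0 .. H2 s \<beta>}))"

definition lc2 :: "real \<Rightarrow> real \<Rightarrow> real \<Rightarrow> real \<Rightarrow> real \<Rightarrow> real" where
  "lc2 r s b \<alpha> \<beta> =
     Inf ((\<lambda>(x, y). gmap s b \<beta> x y) ` ({0 .. H1 r \<alpha>} \<times> {c2 r s b \<alpha> .. H2 s \<beta>}))"

definition Dh :: "real \<Rightarrow> real \<Rightarrow> real \<Rightarrow> real \<Rightarrow> real \<Rightarrow> real \<Rightarrow> real \<Rightarrow> (real \<times> real) set" where
  "Dh r s a b \<alpha> \<beta> h =
     {lc1 r s a \<alpha> \<beta> - h .. H1 r \<alpha>} \<times> {lc2 r s b \<alpha> \<beta> - h .. H2 s \<beta>}"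

definition D :: "real \<Rightarrow> real \<Rightarrow> real \<Rightarrow> real \<Rightarrow> real \<Rightarrow> real \<Rightarrow> (real \<times> real) set" where
  "D r s a b \<alpha> \<beta> = {lc1 r s a \<alpha> \<beta> .. H1 r \<alpha>} \<times> {lc2 r s b \<alpha> \<beta> .. H2 s \<beta>}"

definition is_solution ::
  "real \<Rightarrow> real \<Rightarrow> real \<Rightarrow> real \<Rightarrow> (nat \<Rightarrow> real) \<Rightarrow> (nat \<Rightarrow> real) \<Rightarrow> (nat \<Rightarrow> real) \<Rightarrow> (nat \<Rightarrow> real) \<Rightarrow> bool" where
  "is_solution r s a b al be x y \<longleftrightarrow>
     (\<forall>n. x (Suc n) = x n * ((1 - al (Suc n)) * exp (r - x n - a * y n) + al (Suc n))
        \<and> y (Suc n) = y n * ((1 - be (Suc n)) * exp (s - b * x n - y n) + be (Suc n)))"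

end

theory Submission
  imports Defs "HOL-Analysis.Convex"
begin

text \<open>One step multiplies a population x by (1 - \<alpha>) exp (R - x - w) + \<alpha>, where w is the
  competitor's pressure. For rates in (\<alpha>L, \<alpha>U) this factor lies between its values at the
  extreme rates, so every estimate is uniform in the rate sequences. Below H1 the map stays below
  H1 (a convexity estimate), and a population never drops below min x lc1: the factor is below 1
  only for x > R - w, and there the map at rate \<alpha> dominates the map at rate \<alpha>L, whose
  minimum over that part of the box is lc1. This gives (a) and (b). For (c), the factor
  above H1 + \<delta> is at most a fixed q < 1, so the orbit enters [0, H1 + \<delta>] \<times> [0, H2 + \<delta>];
  there the pressure stays a fixed amount below R, so small populations grow by a fixed factor and
  both species exceed some \<eta> > 0; this pressure in turn pushes them below H1 and H2, and finally
  geometric growth below lc1 - h carries them into D(h). Every phase lasts a number of steps that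
  depends only on the parameters and, through the lower bound \<alpha>L^n x0, on the initial state.\<close>

section \<open>The one-species map\<close>

definition growth_factor :: "real \<Rightarrow> real \<Rightarrow> real" where
  "growth_factor \<alpha> E = (1 - \<alpha>) * exp E + \<alpha>"

definition ricker :: "real \<Rightarrow> real \<Rightarrow> real \<Rightarrow> real \<Rightarrow> real" where
  "ricker \<alpha> R x w = x * growth_factor \<alpha> (R - x - w)"

lemma fmap_eq_ricker: "fmap r a \<alpha> x y = ricker \<alpha> r x (a * y)"
  by (simp add: fmap_def ricker_def growth_factor_def)

lemma gmap_eq_ricker: "gmap s b \<beta> x y = ricker \<beta> s y (b * x)"
  by (simp add: gmap_def ricker_def growth_factor_def algebra_simps)

lemma D_eq_Dh_zero: "D r s a b \<alpha> \<beta> = Dh r s a b \<alpha> \<beta> 0"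
  by (simp add: D_def Dh_def)

lemma growth_factor_zero [simp]: "growth_factor \<alpha> 0 = 1"
  by (simp add: growth_factor_def)

lemma growth_factor_ge_rate: "\<alpha> \<le> 1 \<Longrightarrow> \<alpha> \<le> growth_factor \<alpha> E"
  by (simp add: growth_factor_def)

lemma growth_factor_nonneg: "0 \<le> \<alpha> \<Longrightarrow> \<alpha> \<le> 1 \<Longrightarrow> 0 \<le> growth_factor \<alpha> E"
  using growth_factor_ge_rate[of \<alpha> E] by linarith

lemma growth_factor_mono: "\<alpha> \<le> 1 \<Longrightarrow> E \<le> E' \<Longrightarrow> growth_factor \<alpha> E \<le> growth_factor \<alpha> E'"
  by (simp add: growth_factor_def mult_left_mono)

lemma growth_factor_strict_mono: "\<alpha> < 1 \<Longrightarrow> E < E' \<Longrightarrow> growth_factor \<alpha> E < growth_factor \<alpha> E'"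
  by (simp add: growth_factor_def)

lemma growth_factor_less_one: "\<alpha> < 1 \<Longrightarrow> E < 0 \<Longrightarrow> growth_factor \<alpha> E < 1"
  using growth_factor_strict_mono[of \<alpha> E 0] by simp

lemma growth_factor_gt_one: "\<alpha> < 1 \<Longrightarrow> 0 < E \<Longrightarrow> 1 < growth_factor \<alpha> E"
  using growth_factor_strict_mono[of \<alpha> 0 E] by simp

lemma growth_factor_rate_mono:
  assumes "E \<le> 0" "\<alpha> \<le> \<alpha>'"
  shows "growth_factor \<alpha> E \<le> growth_factor \<alpha>' E"
proof -
  have "0 \<le> (\<alpha>' - \<alpha>) * (1 - exp E)" using assms by simp
  then show ?thesis by (simp add: growth_factor_def algebra_simps)
qed

lemma growth_factor_rate_antimono:
  assumes "0 \<le> E" "\<alpha> \<le> \<alpha>'"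
  shows "growth_factor \<alpha>' E \<le> growth_factor \<alpha> E"
proof -
  have "0 \<le> (\<alpha>' - \<alpha>) * (exp E - 1)" using assms by simp
  then show ?thesis by (simp add: growth_factor_def algebra_simps)
qed

lemma ricker_ge_rate: "0 \<le> x \<Longrightarrow> \<alpha> \<le> 1 \<Longrightarrow> \<alpha> * x \<le> ricker \<alpha> R x w"
  unfolding ricker_def by (metis growth_factor_ge_rate mult.commute mult_left_mono)

lemma ricker_pos: "0 < x \<Longrightarrow> 0 < \<alpha> \<Longrightarrow> \<alpha> \<le> 1 \<Longrightarrow> 0 < ricker \<alpha> R x w"
  using ricker_ge_rate[of x \<alpha> R w] by (smt (verit) mult_pos_pos)

lemma ricker_le_growth_bound:
  "0 \<le> x \<Longrightarrow> growth_factor \<alpha> (R - x - w) \<le> q \<Longrightarrow> ricker \<alpha> R x w \<le> q * x"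
  unfolding ricker_def by (metis mult.commute mult_left_mono)

lemma ricker_ge_growth_bound:
  "0 \<le> x \<Longrightarrow> p \<le> growth_factor \<alpha> (R - x - w) \<Longrightarrow> p * x \<le> ricker \<alpha> R x w"
  unfolding ricker_def by (metis mult.commute mult_left_mono)

lemma H1_ge: "R \<le> H1 R \<alpha>"
  by (simp add: H1_def)

text \<open>The map is dominated by g t = (1 - \<alpha>) t exp (R - t) + \<alpha> t, which is at most its
  value at 2 for t \<le> 2 (as t exp (-t) \<le> exp (-1)), convex on [2, R] with g R = R, and at most
  t beyond R.\<close>
lemma ricker_le_H1:
  assumes "0 \<le> \<alpha>L" "\<alpha>L \<le> \<alpha>" "\<alpha> \<le> 1" "2 \<le> R" "0 \<le> x" "x \<le> H1 R \<alpha>L" "0 \<le> w"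
  shows "ricker \<alpha> R x w \<le> H1 R \<alpha>L"
proof -
  define g where "g t = (1 - \<alpha>) * (t * exp (R - t)) + \<alpha> * t" for t
  have "ricker \<alpha> R x w \<le> g x"
  proof -
    have "(1 - \<alpha>) * (x * exp (R - x - w)) \<le> (1 - \<alpha>) * (x * exp (R - x))"
      using assms by (intro mult_left_mono) auto
    then show ?thesis by (simp add: ricker_def growth_factor_def g_def algebra_simps)
  qed
  moreover have "g x \<le> H1 R \<alpha>L"
  proof -
    have e2: "2 \<le> exp (R - 1)" using exp_ge_add_one_self[of "R - 1"] assms by linarith
    have peak: "t * exp (R - t) \<le> exp (R - 1)" for t
      using exp_ge_add_one_self[of "t - 1"] by (smt (verit) exp_add exp_gt_zero mult_right_mono)
    have g_small: "g t \<le> H1 R \<alpha>L" if "t \<le> 2" for t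
    proof -
      have "g t \<le> (1 - \<alpha>) * exp (R - 1) + \<alpha> * 2"
        unfolding g_def using assms that peak[of t] by (intro add_mono mult_left_mono) auto
      also have "\<dots> \<le> (1 - \<alpha>L) * exp (R - 1) + 2 * \<alpha>L"
        using mult_right_mono[OF assms(2), of "exp (R - 1) - 2"] e2 by (simp add: algebra_simps)
      finally show ?thesis by (simp add: H1_def)
    qed
    consider "x \<le> 2" | "2 \<le> x" "x \<le> R" | "R \<le> x" by linarith
    then show ?thesis
    proof cases
      case 1
      then show ?thesis by (rule g_small)
    next
      case 2
      have "convex_on {2..R} (\<lambda>t. t * exp (R - t))"
      proof (rule f''_ge0_imp_convex)
        fix t :: real
        show "((\<lambda>t. t * exp (R - t)) has_real_derivative (1 - t) * exp (R - t)) (at t)"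
          by (rule derivative_eq_intros refl | simp add: algebra_simps)+
        show "((\<lambda>t. (1 - t) * exp (R - t)) has_real_derivative (t - 2) * exp (R - t)) (at t)"
          by (rule derivative_eq_intros refl | simp add: algebra_simps)+
        assume "t \<in> {2..R}"
        then show "0 \<le> (t - 2) * exp (R - t)" by simp
      qed simp
      then have "convex_on {2..R} g"
        unfolding g_def using assms
        by (intro convex_on_add convex_on_cmul) (auto simp: convex_on_ident)
      then have "g x \<le> max (g 2) (g R)" using 2 by (intro convex_on_le_max) auto
      moreover have "g R = R" by (simp add: g_def algebra_simps)
      ultimately show ?thesis using g_small[of 2] H1_ge[of R \<alpha>L] by linarith
    next
      case 3
      have "x * exp (R - x) \<le> x" using 3 assms by (simp add: mult_left_le)
      then have "(1 - \<alpha>) * (x * exp (R - x)) \<le> (1 - \<alpha>) * x" using assms by (intro mult_left_mono) auto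
      then have "g x \<le> x" unfolding g_def by (simp add: algebra_simps)
      then show ?thesis using assms by linarith
    qed
  qed
  ultimately show ?thesis by linarith
qed

lemma ricker_le_max_contraction:
  assumes "0 \<le> \<alpha>L" "\<alpha>L \<le> \<alpha>" "\<alpha> \<le> \<alpha>U" "\<alpha>U \<le> 1" "2 \<le> R" "0 \<le> x"
    "0 \<le> w0" "w0 \<le> w" "0 \<le> \<delta>"
  shows "ricker \<alpha> R x w \<le> max (growth_factor \<alpha>U (-(\<delta> + w0)) * x) (H1 R \<alpha>L + \<delta>)"
proof -
  consider "x \<le> H1 R \<alpha>L" | "H1 R \<alpha>L < x" "x \<le> H1 R \<alpha>L + \<delta>" | "H1 R \<alpha>L + \<delta> < x"
    by linarith
  then show ?thesis
  proof cases
    case 1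
    then show ?thesis using ricker_le_H1[of \<alpha>L \<alpha> R x w] assms by force
  next
    case 2
    have "growth_factor \<alpha> (R - x - w) \<le> 1"
      using growth_factor_mono[of \<alpha> "R - x - w" 0] 2 H1_ge[of R \<alpha>L] assms by simp
    then have "ricker \<alpha> R x w \<le> 1 * x" using assms by (intro ricker_le_growth_bound) auto
    then show ?thesis using 2 by simp
  next
    case 3
    have "growth_factor \<alpha> (R - x - w) \<le> growth_factor \<alpha>U (R - x - w)"
      using 3 H1_ge[of R \<alpha>L] assms by (intro growth_factor_rate_mono) auto
    also have "\<dots> \<le> growth_factor \<alpha>U (-(\<delta> + w0))"
      using 3 H1_ge[of R \<alpha>L] assms by (intro growth_factor_mono) auto
    finally have "ricker \<alpha> R x w \<le> growth_factor \<alpha>U (-(\<delta> + w0)) * x"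
      using assms by (intro ricker_le_growth_bound)
    then show ?thesis by simp
  qed
qed

lemma ricker_ge_growth:
  assumes "0 \<le> x" "x + w \<le> R - \<epsilon>" "0 \<le> \<epsilon>" "\<alpha> \<le> \<alpha>U" "\<alpha>U \<le> 1"
  shows "growth_factor \<alpha>U \<epsilon> * x \<le> ricker \<alpha> R x w"
proof -
  have "growth_factor \<alpha>U \<epsilon> \<le> growth_factor \<alpha>U (R - x - w)"
    using assms by (intro growth_factor_mono) auto
  also have "\<dots> \<le> growth_factor \<alpha> (R - x - w)"
    using assms by (intro growth_factor_rate_antimono) auto
  finally show ?thesis using assms by (intro ricker_ge_growth_bound)
qed

lemma ricker_ge_min_growth_floor:
  assumes "0 \<le> \<alpha>L" "\<alpha>L \<le> \<alpha>" "\<alpha> \<le> \<alpha>U" "\<alpha>U \<le> 1" "0 \<le> x" "w \<le> W" "W \<le> R"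
  shows "min (growth_factor \<alpha>U ((R - W) / 2) * x) (\<alpha>L * ((R - W) / 2)) \<le> ricker \<alpha> R x w"
proof (cases "x \<le> (R - W) / 2")
  case True
  then have "x + w \<le> R - (R - W) / 2" using assms by (simp add: field_simps)
  then have "growth_factor \<alpha>U ((R - W) / 2) * x \<le> ricker \<alpha> R x w"
    using assms by (intro ricker_ge_growth) auto
  then show ?thesis by linarith
next
  case False
  then have "\<alpha>L * ((R - W) / 2) \<le> \<alpha> * x" using assms by (intro mult_mono) auto
  then show ?thesis using ricker_ge_rate[of x \<alpha> R w] assms by linarith
qed

lemma ricker_ge_min_self:
  assumes "\<alpha>L \<le> \<alpha>" "\<alpha> \<le> 1" "0 \<le> x" "w \<le> Wm"
    and crowded: "R - Wm \<le> x \<Longrightarrow> Lo \<le> ricker \<alpha>L R x w"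
  shows "min x Lo \<le> ricker \<alpha> R x w"
proof (cases "0 \<le> R - x - w")
  case True
  then have "1 * x \<le> ricker \<alpha> R x w"
    using growth_factor_mono[of \<alpha> 0 "R - x - w"] assms by (intro ricker_ge_growth_bound) auto
  then show ?thesis by simp
next
  case False
  have "ricker \<alpha>L R x w \<le> ricker \<alpha> R x w"
    using False assms growth_factor_rate_mono[of "R - x - w" \<alpha>L \<alpha>]
    by (simp add: ricker_def mult_left_mono)
  then show ?thesis using crowded False assms by linarith
qed

lemma ricker_ge_min_growth_gap:
  assumes "\<alpha>L \<le> \<alpha>" "\<alpha> \<le> \<alpha>U" "\<alpha>U \<le> 1" "0 \<le> x" "w \<le> Wm" "Lo \<le> R - Wm" "0 \<le> h"
    and crowded: "R - Wm \<le> x \<Longrightarrow> Lo \<le> ricker \<alpha>L R x w"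
  shows "min (growth_factor \<alpha>U h * x) (Lo - h) \<le> ricker \<alpha> R x w"
proof (cases "x < Lo - h")
  case True
  then have "growth_factor \<alpha>U h * x \<le> ricker \<alpha> R x w"
    using assms by (intro ricker_ge_growth) auto
  then show ?thesis by linarith
next
  case False
  then show ?thesis using ricker_ge_min_self[of \<alpha>L \<alpha> x w Wm R Lo] assms by linarith
qed

section \<open>Geometric recurrences\<close>

lemma max_recurrence_le:
  fixes u :: "nat \<Rightarrow> real"
  assumes rec: "\<And>n. N \<le> n \<Longrightarrow> u (Suc n) \<le> max (q * u n) m" and "0 \<le> q" "q \<le> 1" "0 \<le> m"
  shows "u (N + k) \<le> max (q ^ k * u N) m"
proof (induction k)
  case (Suc k)
  have "q * u (N + k) \<le> q * max (q ^ k * u N) m"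
    using Suc assms by (intro mult_left_mono) auto
  also have "\<dots> \<le> max (q ^ Suc k * u N) m"
    using mult_left_le_one_le[of m q] assms by (auto simp: max_def)
  finally show ?case using rec[of "N + k"] by simp
qed simp

lemma min_recurrence_ge:
  fixes u :: "nat \<Rightarrow> real"
  assumes rec: "\<And>n. N \<le> n \<Longrightarrow> min (p * u n) m \<le> u (Suc n)" and "1 \<le> p" "0 \<le> m"
  shows "min (p ^ k * u N) m \<le> u (N + k)"
proof (induction k)
  case (Suc k)
  have "min (p ^ Suc k * u N) m \<le> p * min (p ^ k * u N) m"
  proof (cases "p ^ k * u N \<le> m")
    case True
    then show ?thesis by simp
  next
    case False
    then have "p * min (p ^ k * u N) m = p * m" by simp
    moreover have "m \<le> p * m" using mult_right_mono[of 1 p m] assms by simp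
    ultimately show ?thesis using min.cobounded2[of "p ^ Suc k * u N" m] by linarith
  qed
  also have "\<dots> \<le> p * u (N + k)"
    using Suc assms by (intro mult_left_mono) auto
  finally show ?case using rec[of "N + k"] by simp
qed simp

lemma max_recurrence_eventually_le:
  fixes u :: "nat \<Rightarrow> real"
  assumes rec: "\<And>n. N \<le> n \<Longrightarrow> u (Suc n) \<le> max (q * u n) m" and "0 \<le> q" "q \<le> 1" "0 \<le> m"
    and "u N \<le> B" "q ^ M * B \<le> m" "N + M \<le> n"
  shows "u n \<le> m"
proof -
  obtain k where n: "n = N + k" and k: "M \<le> k" using \<open>N + M \<le> n\<close> le_Suc_ex by fastforce
  have "q ^ k * u N \<le> m"
  proof (cases "u N \<le> 0")
    case True
    then have "q ^ k * u N \<le> 0" using assms by (simp add: mult_nonneg_nonpos)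
    then show ?thesis using assms by linarith
  next
    case False
    have "q ^ k * u N \<le> q ^ M * u N"
      using power_decreasing[OF k] False assms by (intro mult_right_mono) auto
    also have "\<dots> \<le> q ^ M * B" using assms by (intro mult_left_mono) auto
    finally show ?thesis using assms by linarith
  qed
  moreover have "u (N + k) \<le> max (q ^ k * u N) m" by (rule max_recurrence_le) (use rec assms in auto)
  ultimately show ?thesis using n by simp
qed

lemma min_recurrence_eventually_ge:
  fixes u :: "nat \<Rightarrow> real"
  assumes rec: "\<And>n. N \<le> n \<Longrightarrow> min (p * u n) m \<le> u (Suc n)" and "1 \<le> p" "0 \<le> m"
    and "0 \<le> l" "l \<le> u N" "m \<le> p ^ M * l" "N + M \<le> n"
  shows "m \<le> u n"
proof -
  obtain k where n: "n = N + k" and k: "M \<le> k" using \<open>N + M \<le> n\<close> le_Suc_ex by fastforce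
  have "p ^ M * l \<le> p ^ k * u N"
    using power_increasing[OF k] assms by (intro mult_mono) auto
  then have "m \<le> min (p ^ k * u N) m" using assms by simp
  also have "\<dots> \<le> u (N + k)" by (rule min_recurrence_ge) (use rec assms in auto)
  finally show ?thesis using n by simp
qed

lemma ex_power_mult_less:
  fixes q B m :: real
  assumes "0 \<le> q" "q < 1" "0 < m"
  obtains M where "q ^ M * B < m"
proof (cases "B \<le> 0")
  case True
  then show ?thesis using that[of 0] assms by simp
next
  case False
  obtain M where "q ^ M < m / B" using real_arch_pow_inv[of "m / B" q] assms False by auto
  then show ?thesis using that[of M] False by (simp add: pos_less_divide_eq)
qed

lemma ex_power_mult_greater:
  fixes p l m :: real
  assumes "1 < p" "0 < l"
  obtains M where "m < p ^ M * l"
proof -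
  obtain M where "m / l < p ^ M" using real_arch_pow[OF assms(1)] by auto
  then show ?thesis using that[of M] assms by (simp add: pos_divide_less_eq)
qed

section \<open>One species under bounded competition\<close>

locale ricker_orbit =
  fixes u v \<alpha> :: "nat \<Rightarrow> real" and \<alpha>L \<alpha>U R c :: real
  assumes step: "\<And>n. u (Suc n) = ricker (\<alpha> (Suc n)) R (u n) (c * v n)"
    and rate_lower: "\<And>n. \<alpha>L < \<alpha> (Suc n)" and rate_upper: "\<And>n. \<alpha> (Suc n) < \<alpha>U"
    and params: "0 < \<alpha>L" "\<alpha>U < 1" "2 \<le> R" "0 \<le> c"
    and pos: "\<And>n. 0 < u n" and competitor_nonneg: "\<And>n. 0 \<le> v n"
begin

lemma rate_range:
  "0 \<le> \<alpha>L" "\<alpha>L \<le> \<alpha> (Suc n)" "\<alpha> (Suc n) \<le> \<alpha>U" "\<alpha>U \<le> 1" "0 \<le> \<alpha> (Suc n)" "\<alpha> (Suc n) \<le> 1" "0 \<le> \<alpha>U"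
  using rate_lower[of n] rate_upper[of n] params by auto

lemma nonneg: "0 \<le> u n" "0 \<le> c * v n"
  using pos[of n] competitor_nonneg[of n] params by auto

lemma lower_bound: "\<alpha>L ^ n * u 0 \<le> u n"
proof (induction n)
  case (Suc n)
  have "\<alpha>L * (\<alpha>L ^ n * u 0) \<le> \<alpha> (Suc n) * u n"
    using Suc rate_range nonneg by (intro mult_mono) auto
  also have "\<dots> \<le> u (Suc n)"
    unfolding step using ricker_ge_rate rate_range nonneg by simp
  finally show ?case by simp
qed simp

lemma le_H1_step: "u n \<le> H1 R \<alpha>L \<Longrightarrow> u (Suc n) \<le> H1 R \<alpha>L"
  unfolding step using nonneg params rate_range by (intro ricker_le_H1) auto

lemma ge_min_step:
  assumes "c * v n \<le> Wm" and "R - Wm \<le> u n \<Longrightarrow> Lo \<le> ricker \<alpha>L R (u n) (c * v n)"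
  shows "min (u n) Lo \<le> u (Suc n)"
  unfolding step using assms rate_range nonneg by (intro ricker_ge_min_self[where \<alpha>L = \<alpha>L]) auto

lemma eventually_le_H1_plus:
  assumes "0 \<le> \<delta>" "growth_factor \<alpha>U (-\<delta>) ^ N * u 0 \<le> H1 R \<alpha>L + \<delta>" "N \<le> n"
  shows "u n \<le> H1 R \<alpha>L + \<delta>"
proof (rule max_recurrence_eventually_le[where N = 0 and B = "u 0"])
  show "u (Suc m) \<le> max (growth_factor \<alpha>U (-\<delta>) * u m) (H1 R \<alpha>L + \<delta>)" for m
    using ricker_le_max_contraction[of \<alpha>L "\<alpha> (Suc m)" \<alpha>U R "u m" 0 "c * v m" \<delta>]
      step rate_range nonneg params assms by simp
  show "0 \<le> growth_factor \<alpha>U (-\<delta>)" "growth_factor \<alpha>U (-\<delta>) \<le> 1"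
    using growth_factor_nonneg[of \<alpha>U] growth_factor_mono[of \<alpha>U "-\<delta>" 0] rate_range assms
    by auto
  show "0 \<le> H1 R \<alpha>L + \<delta>" using H1_ge[of R \<alpha>L] params assms by simp
qed (use assms in auto)

lemma eventually_ge_floor:
  assumes "\<And>n. N \<le> n \<Longrightarrow> c * v n \<le> W" "W \<le> R"
    "\<alpha>L * ((R - W) / 2) \<le> growth_factor \<alpha>U ((R - W) / 2) ^ M * (\<alpha>L ^ N * u 0)" "N + M \<le> n"
  shows "\<alpha>L * ((R - W) / 2) \<le> u n"
proof (rule min_recurrence_eventually_ge[where N = N and l = "\<alpha>L ^ N * u 0"])
  show "min (growth_factor \<alpha>U ((R - W) / 2) * u m) (\<alpha>L * ((R - W) / 2)) \<le> u (Suc m)"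
    if "N \<le> m" for m
    unfolding step using assms(1)[OF that] assms(2) rate_range nonneg
    by (intro ricker_ge_min_growth_floor) auto
  show "1 \<le> growth_factor \<alpha>U ((R - W) / 2)"
    using growth_factor_mono[of \<alpha>U 0 "(R - W) / 2"] rate_range assms by auto
  show "0 \<le> \<alpha>L * ((R - W) / 2)" "0 \<le> \<alpha>L ^ N * u 0"
    using assms rate_range nonneg by auto
qed (use assms lower_bound in auto)

lemma eventually_le_H1:
  assumes "\<And>n. N \<le> n \<Longrightarrow> \<eta> \<le> v n" "0 \<le> \<eta>" "u N \<le> B"
    "growth_factor \<alpha>U (-(c * \<eta>)) ^ M * B \<le> H1 R \<alpha>L" "N + M \<le> n"
  shows "u n \<le> H1 R \<alpha>L"
proof (rule max_recurrence_eventually_le[where N = N and B = B])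
  show "u (Suc m) \<le> max (growth_factor \<alpha>U (-(c * \<eta>)) * u m) (H1 R \<alpha>L)" if "N \<le> m" for m
    using ricker_le_max_contraction[of \<alpha>L "\<alpha> (Suc m)" \<alpha>U R "u m" "c * \<eta>" "c * v m" 0]
      assms(1)[OF that] assms(2) step rate_range nonneg params by (simp add: mult_left_mono)
  show "0 \<le> growth_factor \<alpha>U (-(c * \<eta>))" "growth_factor \<alpha>U (-(c * \<eta>)) \<le> 1"
    using growth_factor_nonneg[of \<alpha>U] growth_factor_mono[of \<alpha>U "-(c * \<eta>)" 0] rate_range params assms
    by auto
  show "0 \<le> H1 R \<alpha>L" using H1_ge[of R \<alpha>L] params by simp
qed (use assms in auto)

lemma eventually_ge_gap:
  assumes "\<And>n. N \<le> n \<Longrightarrow> c * v n \<le> Wm"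
    and "\<And>n. N \<le> n \<Longrightarrow> R - Wm \<le> u n \<Longrightarrow> Lo \<le> ricker \<alpha>L R (u n) (c * v n)"
    and "Lo \<le> R - Wm" "0 \<le> h" "h \<le> Lo"
    "Lo - h \<le> growth_factor \<alpha>U h ^ M * (\<alpha>L ^ N * u 0)" "N + M \<le> n"
  shows "Lo - h \<le> u n"
proof (rule min_recurrence_eventually_ge[where N = N and l = "\<alpha>L ^ N * u 0"])
  show "min (growth_factor \<alpha>U h * u m) (Lo - h) \<le> u (Suc m)" if "N \<le> m" for m
    unfolding step using assms(1,2)[OF that] assms(3,4) rate_range nonneg
    by (intro ricker_ge_min_growth_gap[where \<alpha>L = \<alpha>L]) auto
  show "1 \<le> growth_factor \<alpha>U h"
    using growth_factor_mono[of \<alpha>U 0 h] rate_range assms by auto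
  show "0 \<le> \<alpha>L ^ N * u 0" using rate_range nonneg by auto
qed (use assms lower_bound in auto)

end

section \<open>The competition system\<close>

locale competition =
  fixes r s a b aL bL aU bU :: real
  assumes a_bounds: "0 < a" "a < 1" and b_bounds: "0 < b" "b < 1"
    and r_bounds: "2 < r" "a * s < r" and s_bounds: "2 < s" "b * r < s"
    and aL_gt: "alpha_tilde r s b < aL" and bL_gt: "beta_tilde r s a < bL"
    and rate_bounds: "aL < aU" "aU < 1" "bL < bU" "bU < 1"
begin

abbreviation "Hx \<equiv> H1 r aL"
abbreviation "Hy \<equiv> H2 s bL"
abbreviation "Lx \<equiv> lc1 r s a aL bL"
abbreviation "Ly \<equiv> lc2 r s b aL bL"

lemma Hy_eq: "Hy = H1 s bL"
  by (simp add: H1_def H2_def)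

lemma aL_pos: "0 < aL" and bL_pos: "0 < bL"
  using aL_gt bL_gt by (simp_all add: alpha_tilde_def beta_tilde_def)

lemma aL_le_one: "aL \<le> 1" and bL_le_one: "bL \<le> 1"
  using rate_bounds by simp_all

text \<open>The threshold alpha_tilde is exactly what makes c2 = s - b H1 positive, and
  beta_tilde does the same for c1.\<close>
lemma b_Hx_less: "b * Hx < s"
proof -
  have e: "2 < exp (r - 1)" using exp_ge_add_one_self[of "r - 1"] r_bounds by linarith
  have "(exp (r - 1) - s / b) / (exp (r - 1) - 2) < aL" using aL_gt by (simp add: alpha_tilde_def)
  then have "exp (r - 1) - s / b < aL * (exp (r - 1) - 2)" using e by (simp add: divide_less_eq)
  then have "(1 - aL) * exp (r - 1) + 2 * aL < s / b" by (simp add: algebra_simps)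
  then have "b * ((1 - aL) * exp (r - 1) + 2 * aL) < s"
    using b_bounds by (simp add: less_divide_eq mult.commute)
  then show ?thesis using s_bounds by (simp add: H1_def max_def)
qed

lemma a_Hy_less: "a * Hy < r"
proof -
  have e: "2 < exp (s - 1)" using exp_ge_add_one_self[of "s - 1"] s_bounds by linarith
  have "(exp (s - 1) - r / a) / (exp (s - 1) - 2) < bL" using bL_gt by (simp add: beta_tilde_def)
  then have "exp (s - 1) - r / a < bL * (exp (s - 1) - 2)" using e by (simp add: divide_less_eq)
  then have "(1 - bL) * exp (s - 1) + 2 * bL < r / a" by (simp add: algebra_simps)
  then have "a * ((1 - bL) * exp (s - 1) + 2 * bL) < r"
    using a_bounds by (simp add: less_divide_eq mult.commute)
  then show ?thesis using r_bounds by (simp add: H2_def max_def)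
qed

lemma Hx_pos: "0 < Hx" and Hy_pos: "0 < Hy"
  using H1_ge[of r aL] H1_ge[of s bL] r_bounds s_bounds Hy_eq by auto

lemma Lx_le_ricker:
  assumes "r - a * Hy \<le> x" "x \<le> Hx" "0 \<le> y" "y \<le> Hy"
  shows "Lx \<le> ricker aL r x (a * y)"
proof -
  let ?F = "(\<lambda>(x, y). fmap r a aL x y) ` ({c1 r s a bL .. Hx} \<times> {0 .. Hy})"
  have "bdd_below ?F"
  proof (rule bdd_belowI)
    fix z assume "z \<in> ?F"
    then obtain x' y' where z: "z = ricker aL r x' (a * y')" and "r - a * Hy \<le> x'"
      by (auto simp: c1_def fmap_eq_ricker)
    then have "0 < x'" using a_Hy_less by linarith
    then show "0 \<le> z" using ricker_pos[of x' aL r "a * y'"] aL_pos aL_le_one z by simp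
  qed
  moreover have "fmap r a aL x y \<in> ?F" using assms by (force simp: c1_def)
  ultimately show ?thesis unfolding lc1_def fmap_eq_ricker[symmetric] by (rule cInf_lower[rotated])
qed

lemma Ly_le_ricker:
  assumes "s - b * Hx \<le> y" "y \<le> Hy" "0 \<le> x" "x \<le> Hx"
  shows "Ly \<le> ricker bL s y (b * x)"
proof -
  let ?F = "(\<lambda>(x, y). gmap s b bL x y) ` ({0 .. Hx} \<times> {c2 r s b aL .. Hy})"
  have "bdd_below ?F"
  proof (rule bdd_belowI)
    fix z assume "z \<in> ?F"
    then obtain x' y' where z: "z = ricker bL s y' (b * x')" and "s - b * Hx \<le> y'"
      by (auto simp: c2_def gmap_eq_ricker)
    then have "0 < y'" using b_Hx_less by linarith
    then show "0 \<le> z" using ricker_pos[of y' bL s "b * x'"] bL_pos bL_le_one z by simp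
  qed
  moreover have "gmap s b bL x y \<in> ?F" using assms by (force simp: c2_def)
  ultimately show ?thesis unfolding lc2_def gmap_eq_ricker[symmetric] by (rule cInf_lower[rotated])
qed

lemma Lx_le: "Lx \<le> r - a * Hy"
  using Lx_le_ricker[of "r - a * Hy" "Hy"] H1_ge[of r aL] mult_pos_pos[OF a_bounds(1) Hy_pos] Hy_pos
  by (simp add: ricker_def)

lemma Ly_le: "Ly \<le> s - b * Hx"
  using Ly_le_ricker[of "s - b * Hx" "Hx"] H1_ge[of s bL] Hy_eq mult_pos_pos[OF b_bounds(1) Hx_pos] Hx_pos
  by (simp add: ricker_def)

definition orbit :: "(nat \<Rightarrow> real) \<Rightarrow> (nat \<Rightarrow> real) \<Rightarrow> bool" where
  "orbit x y \<longleftrightarrow> 0 < x 0 \<and> 0 < y 0 \<and>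
     (\<exists>al be. (\<forall>n. al (Suc n) \<in> {aL<..<aU} \<and> be (Suc n) \<in> {bL<..<bU}) \<and> is_solution r s a b al be x y)"

lemma orbit_components:
  assumes "orbit x y"
  obtains \<alpha> \<beta> where "ricker_orbit x y \<alpha> aL aU r a" "ricker_orbit y x \<beta> bL bU s b"
proof -
  obtain al be where rates: "\<And>n. al (Suc n) \<in> {aL<..<aU} \<and> be (Suc n) \<in> {bL<..<bU}"
    and sol: "is_solution r s a b al be x y" and start: "0 < x 0" "0 < y 0"
    using assms unfolding orbit_def by blast
  have X: "x (Suc n) = ricker (al (Suc n)) r (x n) (a * y n)"
    and Y: "y (Suc n) = ricker (be (Suc n)) s (y n) (b * x n)" for n
    using sol by (simp_all add: is_solution_def ricker_def growth_factor_def algebra_simps)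
  have pos: "0 < x n \<and> 0 < y n" for n
  proof (induction n)
    case (Suc n)
    then show ?case
      unfolding X Y using rates[of n] aL_pos bL_pos rate_bounds by (auto intro!: ricker_pos)
  qed (use start in simp)
  then have "0 \<le> x n" "0 \<le> y n" for n by (simp_all add: less_imp_le)
  then show thesis
    using that[of al be] X Y rates pos aL_pos bL_pos rate_bounds r_bounds s_bounds a_bounds b_bounds
    by (simp add: ricker_orbit_def)
qed

lemma orbit_bounds:
  assumes "orbit x y" "x 0 \<le> Hx" "y 0 \<le> Hy"
  shows "x n \<le> Hx \<and> y n \<le> Hy \<and> min (x 0) Lx \<le> x n \<and> min (y 0) Ly \<le> y n"
proof -
  obtain \<alpha> \<beta> where X: "ricker_orbit x y \<alpha> aL aU r a" and Y: "ricker_orbit y x \<beta> bL bU s b"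
    using assms(1) by (rule orbit_components)
  interpret X: ricker_orbit x y \<alpha> aL aU r a by (fact X)
  interpret Y: ricker_orbit y x \<beta> bL bU s b by (fact Y)
  show ?thesis
  proof (induction n)
    case (Suc n)
    then have "x n \<le> Hx" "y n \<le> Hy" by auto
    have "min (x n) Lx \<le> x (Suc n)"
    proof (rule X.ge_min_step)
      show "a * y n \<le> a * Hy" using \<open>y n \<le> Hy\<close> a_bounds by simp
      show "Lx \<le> ricker aL r (x n) (a * y n)" if "r - a * Hy \<le> x n"
        using Lx_le_ricker that \<open>x n \<le> Hx\<close> \<open>y n \<le> Hy\<close> Y.nonneg(1) by blast
    qed
    moreover have "min (y n) Ly \<le> y (Suc n)"
    proof (rule Y.ge_min_step)
      show "b * x n \<le> b * Hx" using \<open>x n \<le> Hx\<close> b_bounds by simp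
      show "Ly \<le> ricker bL s (y n) (b * x n)" if "s - b * Hx \<le> y n"
        using Ly_le_ricker that \<open>x n \<le> Hx\<close> \<open>y n \<le> Hy\<close> X.nonneg(1) by blast
    qed
    moreover have "x (Suc n) \<le> Hx" "y (Suc n) \<le> Hy"
      using X.le_H1_step[of n] Y.le_H1_step[of n] \<open>x n \<le> Hx\<close> \<open>y n \<le> Hy\<close> unfolding Hy_eq by simp_all
    moreover have "min (x 0) Lx \<le> min (x n) Lx" "min (y 0) Ly \<le> min (y n) Ly"
      using Suc by (simp_all add: min.coboundedI1)
    ultimately show ?case by linarith
  qed (use assms in simp)
qed

lemma Dh_invariant:
  assumes "orbit x y" "0 \<le> h" "(x 0, y 0) \<in> Dh r s a b aL bL h"
  shows "(x n, y n) \<in> Dh r s a b aL bL h"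
proof -
  have "Lx - h \<le> min (x 0) Lx" "Ly - h \<le> min (y 0) Ly" using assms(2,3) by (auto simp: Dh_def)
  then show ?thesis using orbit_bounds[OF assms(1), of n] assms(3) by (auto simp: Dh_def)
qed

text \<open>The threshold N may depend on the initial state, but not on the rate sequences.\<close>
definition uniformly_eventually :: "real \<Rightarrow> real \<Rightarrow> (real \<Rightarrow> real \<Rightarrow> bool) \<Rightarrow> bool" where
  "uniformly_eventually x0 y0 P \<longleftrightarrow>
     (\<exists>N. \<forall>x y n. orbit x y \<longrightarrow> x 0 = x0 \<longrightarrow> y 0 = y0 \<longrightarrow> N \<le> n \<longrightarrow> P (x n) (y n))"

lemma uniformly_eventuallyI:
  assumes "\<And>x y n. orbit x y \<Longrightarrow> x 0 = x0 \<Longrightarrow> y 0 = y0 \<Longrightarrow> N \<le> n \<Longrightarrow> P (x n) (y n)"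
  shows "uniformly_eventually x0 y0 P"
  unfolding uniformly_eventually_def using assms by blast

context
  fixes x0 y0 :: real
  assumes x0_pos: "0 < x0" and y0_pos: "0 < y0"
begin

lemma uniformly_eventually_le_H_plus:
  assumes "0 < \<delta>"
  shows "uniformly_eventually x0 y0 (\<lambda>x y. x \<le> Hx + \<delta> \<and> y \<le> Hy + \<delta>)"
proof -
  have qx: "0 \<le> growth_factor aU (-\<delta>)" "growth_factor aU (-\<delta>) < 1"
    and qy: "0 \<le> growth_factor bU (-\<delta>)" "growth_factor bU (-\<delta>) < 1"
    using aL_pos bL_pos rate_bounds assms
    by (auto intro: growth_factor_nonneg growth_factor_less_one)
  obtain Nx where Nx: "growth_factor aU (-\<delta>) ^ Nx * x0 < Hx + \<delta>"
    using ex_power_mult_less[OF qx, where B = x0 and m = "Hx + \<delta>"] Hx_pos assms by auto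
  obtain Ny where Ny: "growth_factor bU (-\<delta>) ^ Ny * y0 < Hy + \<delta>"
    using ex_power_mult_less[OF qy, where B = y0 and m = "Hy + \<delta>"] Hy_pos assms by auto
  show ?thesis
  proof (rule uniformly_eventuallyI[where N = "Nx + Ny"])
    fix x y n assume "orbit x y" "x 0 = x0" "y 0 = y0" "Nx + Ny \<le> n"
    obtain \<alpha> \<beta> where X: "ricker_orbit x y \<alpha> aL aU r a" and Y: "ricker_orbit y x \<beta> bL bU s b"
      using \<open>orbit x y\<close> by (rule orbit_components)
    have "x n \<le> Hx + \<delta>"
      by (rule ricker_orbit.eventually_le_H1_plus[OF X, where N = Nx])
        (use assms Nx \<open>x 0 = x0\<close> \<open>Nx + Ny \<le> n\<close> in auto)
    moreover have "y n \<le> H1 s bL + \<delta>"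
      by (rule ricker_orbit.eventually_le_H1_plus[OF Y, where N = Ny])
        (use assms Ny Hy_eq \<open>y 0 = y0\<close> \<open>Nx + Ny \<le> n\<close> in auto)
    ultimately show "x n \<le> Hx + \<delta> \<and> y n \<le> Hy + \<delta>" using Hy_eq by simp
  qed
qed

lemma uniformly_eventually_persistent:
  obtains \<eta> where "0 < \<eta>" "uniformly_eventually x0 y0 (\<lambda>x y. \<eta> \<le> x \<and> \<eta> \<le> y)"
proof -
  define \<delta> where "\<delta> = min (r - a * Hy) (s - b * Hx)"
  have "0 < \<delta>" using a_Hy_less b_Hx_less by (simp add: \<delta>_def)
  define Wx Wy where "Wx = a * (Hy + \<delta>)" and "Wy = b * (Hx + \<delta>)"
  have "a * \<delta> < \<delta>" "b * \<delta> < \<delta>" using \<open>0 < \<delta>\<close> a_bounds b_bounds by simp_all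
  then have "Wx < r" "Wy < s" unfolding Wx_def Wy_def \<delta>_def by (simp_all add: algebra_simps)
  define \<eta>x \<eta>y where "\<eta>x = aL * ((r - Wx) / 2)" and "\<eta>y = bL * ((s - Wy) / 2)"
  obtain N where N: "\<And>x y n. orbit x y \<Longrightarrow> x 0 = x0 \<Longrightarrow> y 0 = y0 \<Longrightarrow> N \<le> n \<Longrightarrow>
      x n \<le> Hx + \<delta> \<and> y n \<le> Hy + \<delta>"
    using uniformly_eventually_le_H_plus[OF \<open>0 < \<delta>\<close>] unfolding uniformly_eventually_def by blast
  have px: "1 < growth_factor aU ((r - Wx) / 2)" and py: "1 < growth_factor bU ((s - Wy) / 2)"
    using \<open>Wx < r\<close> \<open>Wy < s\<close> rate_bounds by (simp_all add: growth_factor_gt_one)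
  obtain Mx where Mx: "\<eta>x < growth_factor aU ((r - Wx) / 2) ^ Mx * (aL ^ N * x0)"
    using ex_power_mult_greater[OF px, where l = "aL ^ N * x0" and m = \<eta>x] aL_pos x0_pos by auto
  obtain My where My: "\<eta>y < growth_factor bU ((s - Wy) / 2) ^ My * (bL ^ N * y0)"
    using ex_power_mult_greater[OF py, where l = "bL ^ N * y0" and m = \<eta>y] bL_pos y0_pos by auto
  show thesis
  proof (rule that)
    show "0 < min \<eta>x \<eta>y"
      using aL_pos bL_pos \<open>Wx < r\<close> \<open>Wy < s\<close> by (simp add: \<eta>x_def \<eta>y_def)
    show "uniformly_eventually x0 y0 (\<lambda>x y. min \<eta>x \<eta>y \<le> x \<and> min \<eta>x \<eta>y \<le> y)"
    proof (rule uniformly_eventuallyI[where N = "N + Mx + My"])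
      fix x y n assume xy: "orbit x y" "x 0 = x0" "y 0 = y0" and n: "N + Mx + My \<le> n"
      obtain \<alpha> \<beta> where X: "ricker_orbit x y \<alpha> aL aU r a" and Y: "ricker_orbit y x \<beta> bL bU s b"
        using xy(1) by (rule orbit_components)
      have "\<eta>x \<le> x n" unfolding \<eta>x_def
      proof (rule ricker_orbit.eventually_ge_floor[OF X, where N = N and M = Mx])
        show "a * y m \<le> Wx" if "N \<le> m" for m
          using N[OF xy that] a_bounds by (simp add: Wx_def)
      qed (use Mx n xy \<open>Wx < r\<close> in \<open>auto simp: \<eta>x_def\<close>)
      moreover have "\<eta>y \<le> y n" unfolding \<eta>y_def
      proof (rule ricker_orbit.eventually_ge_floor[OF Y, where N = N and M = My])
        show "b * x m \<le> Wy" if "N \<le> m" for m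
          using N[OF xy that] b_bounds by (simp add: Wy_def)
      qed (use My n xy \<open>Wy < s\<close> in \<open>auto simp: \<eta>y_def\<close>)
      ultimately show "min \<eta>x \<eta>y \<le> x n \<and> min \<eta>x \<eta>y \<le> y n" by linarith
    qed
  qed
qed

lemma uniformly_eventually_le_H:
  "uniformly_eventually x0 y0 (\<lambda>x y. x \<le> Hx \<and> y \<le> Hy)"
proof -
  obtain N1 where N1: "\<And>x y n. orbit x y \<Longrightarrow> x 0 = x0 \<Longrightarrow> y 0 = y0 \<Longrightarrow> N1 \<le> n \<Longrightarrow>
      x n \<le> Hx + 1 \<and> y n \<le> Hy + 1"
    using uniformly_eventually_le_H_plus[of 1] unfolding uniformly_eventually_def by auto
  obtain \<eta> N2 where "0 < \<eta>" and N2: "\<And>x y n. orbit x y \<Longrightarrow> x 0 = x0 \<Longrightarrow> y 0 = y0 \<Longrightarrow> N2 \<le> n \<Longrightarrow>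
      \<eta> \<le> x n \<and> \<eta> \<le> y n"
    using uniformly_eventually_persistent unfolding uniformly_eventually_def by metis
  have qx: "0 \<le> growth_factor aU (-(a * \<eta>))" "growth_factor aU (-(a * \<eta>)) < 1"
    and qy: "0 \<le> growth_factor bU (-(b * \<eta>))" "growth_factor bU (-(b * \<eta>)) < 1"
    using aL_pos bL_pos rate_bounds a_bounds b_bounds \<open>0 < \<eta>\<close>
    by (auto intro: growth_factor_nonneg growth_factor_less_one)
  obtain Mx where Mx: "growth_factor aU (-(a * \<eta>)) ^ Mx * (Hx + 1) < Hx"
    using ex_power_mult_less[OF qx, where B = "Hx + 1" and m = Hx] Hx_pos by auto
  obtain My where My: "growth_factor bU (-(b * \<eta>)) ^ My * (Hy + 1) < Hy"
    using ex_power_mult_less[OF qy, where B = "Hy + 1" and m = Hy] Hy_pos by auto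
  show ?thesis
  proof (rule uniformly_eventuallyI[where N = "N1 + N2 + Mx + My"])
    fix x y n assume xy: "orbit x y" "x 0 = x0" "y 0 = y0" and n: "N1 + N2 + Mx + My \<le> n"
    obtain \<alpha> \<beta> where X: "ricker_orbit x y \<alpha> aL aU r a" and Y: "ricker_orbit y x \<beta> bL bU s b"
      using xy(1) by (rule orbit_components)
    have "x n \<le> Hx"
      by (rule ricker_orbit.eventually_le_H1[OF X, where N = "N1 + N2" and \<eta> = \<eta> and B = "Hx + 1" and M = Mx])
        (use N1[OF xy] N2[OF xy] \<open>0 < \<eta>\<close> Mx n in auto)
    moreover have "y n \<le> H1 s bL"
      by (rule ricker_orbit.eventually_le_H1[OF Y, where N = "N1 + N2" and \<eta> = \<eta> and B = "Hy + 1" and M = My])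
        (use N1[OF xy] N2[OF xy] \<open>0 < \<eta>\<close> My n Hy_eq in auto)
    ultimately show "x n \<le> Hx \<and> y n \<le> Hy" using Hy_eq by simp
  qed
qed

lemma uniformly_eventually_in_Dh:
  assumes "0 < h" "h < min Lx Ly"
  shows "uniformly_eventually x0 y0 (\<lambda>x y. (x, y) \<in> Dh r s a b aL bL h)"
proof -
  obtain N where N: "\<And>x y n. orbit x y \<Longrightarrow> x 0 = x0 \<Longrightarrow> y 0 = y0 \<Longrightarrow> N \<le> n \<Longrightarrow>
      x n \<le> Hx \<and> y n \<le> Hy"
    using uniformly_eventually_le_H unfolding uniformly_eventually_def by blast
  have px: "1 < growth_factor aU h" and py: "1 < growth_factor bU h"
    using assms rate_bounds by (simp_all add: growth_factor_gt_one)
  obtain Mx where Mx: "Lx - h < growth_factor aU h ^ Mx * (aL ^ N * x0)"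
    using ex_power_mult_greater[OF px, where l = "aL ^ N * x0" and m = "Lx - h"] aL_pos x0_pos by auto
  obtain My where My: "Ly - h < growth_factor bU h ^ My * (bL ^ N * y0)"
    using ex_power_mult_greater[OF py, where l = "bL ^ N * y0" and m = "Ly - h"] bL_pos y0_pos by auto
  show ?thesis
  proof (rule uniformly_eventuallyI[where N = "N + Mx + My"])
    fix x y n assume xy: "orbit x y" "x 0 = x0" "y 0 = y0" and n: "N + Mx + My \<le> n"
    obtain \<alpha> \<beta> where X: "ricker_orbit x y \<alpha> aL aU r a" and Y: "ricker_orbit y x \<beta> bL bU s b"
      using xy(1) by (rule orbit_components)
    have "Lx - h \<le> x n"
    proof (rule ricker_orbit.eventually_ge_gap[OF X, where N = N and Wm = "a * Hy" and M = Mx])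
      show "a * y m \<le> a * Hy" if "N \<le> m" for m using N[OF xy that] a_bounds by simp
      show "Lx \<le> ricker aL r (x m) (a * y m)" if "N \<le> m" "r - a * Hy \<le> x m" for m
        using N[OF xy that(1)] that(2) ricker_orbit.nonneg(1)[OF Y, of m] by (intro Lx_le_ricker) auto
    qed (use assms Lx_le Mx n xy in auto)
    moreover have "Ly - h \<le> y n"
    proof (rule ricker_orbit.eventually_ge_gap[OF Y, where N = N and Wm = "b * Hx" and M = My])
      show "b * x m \<le> b * Hx" if "N \<le> m" for m using N[OF xy that] b_bounds by simp
      show "Ly \<le> ricker bL s (y m) (b * x m)" if "N \<le> m" "s - b * Hx \<le> y m" for m
        using N[OF xy that(1)] that(2) ricker_orbit.nonneg(1)[OF X, of m] by (intro Ly_le_ricker) auto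
    qed (use assms Ly_le My n xy in auto)
    ultimately show "(x n, y n) \<in> Dh r s a b aL bL h"
      using N[OF xy, of n] n by (simp add: Dh_def)
  qed
qed

end

end

theorem mainTheorem4:
  fixes a b r s aL bL aU bU h :: real
  assumes "0 < a" "a < 1" "0 < b" "b < 1" "r > 2" "s > 2" "r > a * s" "s > b * r"
    and "alpha_tilde r s b < aL" "aL < 1" "beta_tilde r s a < bL" "bL < 1"
    and "aL < aU" "aU < 1" "bL < bU" "bU < 1"
    and "0 < h" "h < min (lc1 r s a aL bL) (lc2 r s b aL bL)"
  shows
    "(\<forall>al be x y.
        (\<forall>n. al (Suc n) \<in> {aL<..<aU} \<and> be (Suc n) \<in> {bL<..<bU}) \<longrightarrow>
        is_solution r s a b al be x y \<longrightarrow> x 0 > 0 \<longrightarrow> y 0 > 0 \<longrightarrow>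
        (x 0, y 0) \<in> D r s a b aL bL \<longrightarrow> (\<forall>n. (x n, y n) \<in> D r s a b aL bL))
   \<and> (\<forall>al be x y.
        (\<forall>n. al (Suc n) \<in> {aL<..<aU} \<and> be (Suc n) \<in> {bL<..<bU}) \<longrightarrow>
        is_solution r s a b al be x y \<longrightarrow> x 0 > 0 \<longrightarrow> y 0 > 0 \<longrightarrow>
        (x 0, y 0) \<in> Dh r s a b aL bL h \<longrightarrow> (\<forall>n. (x n, y n) \<in> Dh r s a b aL bL h))
   \<and> (\<forall>x0 y0. x0 > 0 \<longrightarrow> y0 > 0 \<longrightarrow> (x0, y0) \<notin> Dh r s a b aL bL h \<longrightarrow>
        (\<exists>S::nat. S \<ge> 1 \<and> (\<forall>al be x y.
           (\<forall>n. al (Suc n) \<in> {aL<..<aU} \<and> be (Suc n) \<in> {bL<..<bU}) \<longrightarrow>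
           is_solution r s a b al be x y \<longrightarrow> x 0 = x0 \<longrightarrow> y 0 = y0 \<longrightarrow>
           (\<forall>n\<ge>S. (x n, y n) \<in> Dh r s a b aL bL h))))"
proof -
  interpret competition r s a b aL bL aU bU
    using assms by unfold_locales auto
  have orbit: "orbit x y"
    if "\<forall>n. al (Suc n) \<in> {aL<..<aU} \<and> be (Suc n) \<in> {bL<..<bU}"
      "is_solution r s a b al be x y" "0 < x 0" "0 < y 0" for al be x y
    using that unfolding orbit_def by blast
  have attracted: "\<exists>S::nat. S \<ge> 1 \<and> (\<forall>al be x y.
           (\<forall>n. al (Suc n) \<in> {aL<..<aU} \<and> be (Suc n) \<in> {bL<..<bU}) \<longrightarrow>
           is_solution r s a b al be x y \<longrightarrow> x 0 = x0 \<longrightarrow> y 0 = y0 \<longrightarrow>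
           (\<forall>n\<ge>S. (x n, y n) \<in> Dh r s a b aL bL h))"
    if start: "0 < x0" "0 < y0" for x0 y0
  proof -
    obtain N where "\<forall>x y n. orbit x y \<longrightarrow> x 0 = x0 \<longrightarrow> y 0 = y0 \<longrightarrow> N \<le> n \<longrightarrow>
        (x n, y n) \<in> Dh r s a b aL bL h"
      using uniformly_eventually_in_Dh[OF start assms(17,18)] unfolding uniformly_eventually_def by blast
    then show ?thesis using orbit start by (intro exI[of _ "Suc N"]) auto
  qed
  show ?thesis
    using Dh_invariant[OF orbit] attracted assms(17) unfolding D_eq_Dh_zero by auto
qed

end
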